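(* Let $V$ be a finite-dimensional complex vector space and let $A(u),A'(u):\mathbb C\to GL(V)$ be rational functions, both of the form $1+A_0u^{-1}+O(u^{-2})$ near $\infty$ (with the same $A_0$), such that the difference equations $\phi(u+1)=A(u)\phi(u)$ and $\phi(u+1)=A'(u)\phi(u)$ admit canonical fundamental solutions and have equal connection matrices. Let $\mathcal P,\mathcal Z\subset\mathbb C$ be the sets of poles of $A(u)$ and $A(u)^{-1}$, and $\mathcal P',\mathcal Z'$ those of $A'(u)$ and $A'(u)^{-1}$. If each of the pairs $(\mathcal Z,\mathcal P)$, $(\mathcal Z',\mathcal P')$, $(\mathcal Z,\mathcal Z')$, $(\mathcal P,\mathcal P')$ is non-congruent, then $A=A'$.
   Context: Two subsets $X,Y\subset\mathbb C$ are non-congruent if $x-y\notin\mathbb Z\setminus\{0\}$ for all $x\in X$, $y\in Y$. For a rational $A(u)=1+A_0u^{-1}+\cdots$, canonical fundamental solutions of $\phi(u+1)=A(u)\phi(u)$ are meromorphic solutions $\phi^\pm:\mathbb C\to\mathrm{End}(V)$ that are holomorphic and invertible for $\pm\mathrm{Re}(u)\gg0$ and have asymptotic expansions $\phi^\pm(u)\sim(1+H^\pm_0u^{-1}+H^\pm_1u^{-2}+\cdots)(\pm u)^{A_0}$ in every right (resp. left) half-plane (principal branch of $\log$); they exist and are unique when the system is non-resonant (e.g. when all $A(u)$ commute). The connection matrix is $S(u)=\phi^+(u)^{-1}\phi^-(u)$. *)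

theory Defs
  imports "HOL-Complex_Analysis.Complex_Analysis" "HOL-Computational_Algebra.Polynomial"
begin

text \<open>End(V) for V = complex^'n is represented by complex^'n^'n, composition by **.\<close>

type_synonym 'n cmat = "complex ^ 'n ^ 'n"

definition smat :: "complex \<Rightarrow> 'n cmat \<Rightarrow> 'n::finite cmat" where
  "smat c M = (\<chi> i j. c * M $ i $ j)"

fun matpow :: "'n::finite cmat \<Rightarrow> nat \<Rightarrow> 'n cmat" where
  "matpow M 0 = mat 1"
| "matpow M (Suc k) = M ** matpow M k"

definition mexp :: "'n::finite cmat \<Rightarrow> 'n cmat" where
  "mexp M = (\<Sum>k. smat (1 / of_nat (fact k)) (matpow M k))"

text \<open>Rational scalar function (values at the zeros of the denominator are irrelevant).\<close>
definition rational_fun :: "(complex \<Rightarrow> complex) \<Rightarrow> bool" where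
  "rational_fun f \<longleftrightarrow> (\<exists>p q. q \<noteq> 0 \<and> (\<forall>u. poly q u \<noteq> 0 \<longrightarrow> f u = poly p u / poly q u))"

definition rational_GL :: "(complex \<Rightarrow> 'n::finite cmat) \<Rightarrow> bool" where
  "rational_GL A \<longleftrightarrow> (\<forall>i j. rational_fun (\<lambda>u. A u $ i $ j)) \<and> finite {u. \<not> invertible (A u)}"

definition normalized_at_infty :: "(complex \<Rightarrow> 'n::finite cmat) \<Rightarrow> 'n cmat \<Rightarrow> bool" where
  "normalized_at_infty A A0 \<longleftrightarrow>
     (\<exists>C. \<forall>\<^sub>F u in at_infinity. norm (A u - mat 1 - smat (1 / u) A0) \<le> C / norm u ^ 2)"

definition poles_mat :: "(complex \<Rightarrow> 'n::finite cmat) \<Rightarrow> complex set" where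
  "poles_mat A = {z. \<exists>i j. is_pole (\<lambda>u. A u $ i $ j) z}"

definition noncongruent :: "complex set \<Rightarrow> complex set \<Rightarrow> bool" where
  "noncongruent X Y \<longleftrightarrow> (\<forall>x\<in>X. \<forall>y\<in>Y. x - y \<notin> \<int> - {0})"

definition mat_meromorphic :: "(complex \<Rightarrow> 'n::finite cmat) \<Rightarrow> bool" where
  "mat_meromorphic \<phi> \<longleftrightarrow> (\<forall>i j. (\<lambda>u. \<phi> u $ i $ j) meromorphic_on UNIV)"

text \<open>Equality of meromorphic functions: equal in a punctured neighbourhood of every point.\<close>
definition mero_eq :: "(complex \<Rightarrow> 'n::finite cmat) \<Rightarrow> (complex \<Rightarrow> 'n cmat) \<Rightarrow> bool" where
  "mero_eq f g \<longleftrightarrow> (\<forall>z. \<forall>\<^sub>F u in at z. f u = g u)"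

definition solves_diff_eq :: "(complex \<Rightarrow> 'n::finite cmat) \<Rightarrow> (complex \<Rightarrow> 'n cmat) \<Rightarrow> bool" where
  "solves_diff_eq A \<phi> \<longleftrightarrow> mat_meromorphic \<phi> \<and> mero_eq (\<lambda>u. \<phi> (u + 1)) (\<lambda>u. A u ** \<phi> u)"

definition canonical_plus :: "(complex \<Rightarrow> 'n::finite cmat) \<Rightarrow> 'n cmat \<Rightarrow> (complex \<Rightarrow> 'n cmat) \<Rightarrow> bool" where
  "canonical_plus A A0 \<phi> \<longleftrightarrow> solves_diff_eq A \<phi> \<and>
     (\<exists>c. (\<forall>i j. (\<lambda>u. \<phi> u $ i $ j) holomorphic_on {u. Re u > c}) \<and>
          (\<forall>u. Re u > c \<longrightarrow> invertible (\<phi> u))) \<and>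
     (\<exists>H :: nat \<Rightarrow> 'n cmat. \<forall>c. \<forall>N. \<exists>C.
        \<forall>\<^sub>F u in inf at_infinity (principal {u. Re u > c}).
          norm (\<phi> u ** mexp (smat (- Ln u) A0)
                - (mat 1 + (\<Sum>k<N. smat (1 / u ^ (k + 1)) (H k)))) \<le> C / norm u ^ (N + 1))"

definition canonical_minus :: "(complex \<Rightarrow> 'n::finite cmat) \<Rightarrow> 'n cmat \<Rightarrow> (complex \<Rightarrow> 'n cmat) \<Rightarrow> bool" where
  "canonical_minus A A0 \<phi> \<longleftrightarrow> solves_diff_eq A \<phi> \<and>
     (\<exists>c. (\<forall>i j. (\<lambda>u. \<phi> u $ i $ j) holomorphic_on {u. Re u < c}) \<and>
          (\<forall>u. Re u < c \<longrightarrow> invertible (\<phi> u))) \<and>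
     (\<exists>H :: nat \<Rightarrow> 'n cmat. \<forall>c. \<forall>N. \<exists>C.
        \<forall>\<^sub>F u in inf at_infinity (principal {u. Re u < c}).
          norm (\<phi> u ** mexp (smat (- Ln (- u)) A0)
                - (mat 1 + (\<Sum>k<N. smat (1 / u ^ (k + 1)) (H k)))) \<le> C / norm u ^ (N + 1))"

definition connection :: "(complex \<Rightarrow> 'n::finite cmat) \<Rightarrow> (complex \<Rightarrow> 'n cmat) \<Rightarrow> complex \<Rightarrow> 'n cmat" where
  "connection \<phi>p \<phi>m u = matrix_inv (\<phi>p u) ** \<phi>m u"

end

(*
  Let M = \<phi>'\<^sub>+ \<phi>\<^sub>+\<^sup>-\<^sup>1. It is holomorphic on a right half-plane, and equality of the connection
  matrices gives M = \<phi>'\<^sub>- \<phi>\<^sub>-\<^sup>-\<^sup>1, holomorphic on a left half-plane. M is a gauge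
  transformation, M(u+1) = A'(u) M(u) A(u)\<^sup>-\<^sup>1, so a singularity of M at z forces a pole of
  A'\<^sup>-\<^sup>1 or A among z, z+1, z+2, ... and a pole of A' or A\<^sup>-\<^sup>1 among z-1, z-2, ...; these two
  points differ by a nonzero integer, which non-congruence forbids. Hence M is entire. Both
  canonical asymptotics give M \<rightarrow> 1 at infinity, so M = 1 by Liouville; then A = A' near a
  point, and since both are rational they agree away from finitely many points.
*)
theory Submission
  imports Defs
begin

(* Defs imports formal power series, whose coefficient notation clashes with vec_nth. *)
no_notation Formal_Power_Series.fps_nth (infixl \<open>$\<close> 75)

section \<open>Matrix inverses\<close>

lemma matrix_mul_matrix_inv:
  fixes X :: "'a::semiring_1^'n^'n"
  assumes "invertible X"
  shows "X ** matrix_inv X = mat 1" and "matrix_inv X ** X = mat 1"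
proof -
  have "\<exists>Y. X ** Y = mat 1 \<and> Y ** X = mat 1"
    using assms unfolding invertible_def by blast
  then have "X ** matrix_inv X = mat 1 \<and> matrix_inv X ** X = mat 1"
    unfolding matrix_inv_def by (rule someI_ex)
  then show "X ** matrix_inv X = mat 1" and "matrix_inv X ** X = mat 1"
    by auto
qed

lemma matrix_mul_right_cancel:
  fixes Y Z W :: "'a::semiring_1^'n^'n"
  assumes "invertible Z" and "Y ** Z = W"
  shows "Y = W ** matrix_inv Z"
proof -
  have "Y = Y ** (Z ** matrix_inv Z)"
    using matrix_mul_matrix_inv(1)[OF assms(1)] by simp
  also have "\<dots> = W ** matrix_inv Z"
    by (simp add: assms(2) matrix_mul_assoc)
  finally show ?thesis .
qed

lemma mult_matrix_inv_eq_mat1_iff: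
  fixes A B :: "'a::semiring_1^'n^'n"
  assumes "invertible A"
  shows "B ** matrix_inv A = mat 1 \<longleftrightarrow> B = A"
proof
  assume "B ** matrix_inv A = mat 1"
  then have "B ** (matrix_inv A ** A) = A"
    by (simp add: matrix_mul_assoc)
  then show "B = A"
    using matrix_mul_matrix_inv(2)[OF assms] by simp
qed (simp add: matrix_mul_matrix_inv(1)[OF assms])

lemma mult_matrix_inv_mult_left:
  fixes P Q A A' :: "'a::semiring_1^'n^'n"
  assumes "invertible P" and "invertible A"
  shows "(A' ** Q) ** matrix_inv (A ** P) = A' ** (Q ** matrix_inv P) ** matrix_inv A"
proof -
  have "A' ** (Q ** matrix_inv P) ** matrix_inv A ** (A ** P)
        = A' ** Q ** (matrix_inv P ** (matrix_inv A ** A) ** P)"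
    by (simp add: matrix_mul_assoc)
  also have "\<dots> = A' ** Q"
    by (simp add: matrix_mul_matrix_inv(2) assms)
  finally show ?thesis
    using matrix_mul_right_cancel invertible_mult assms by metis
qed

lemma mult_matrix_inv_eq_if_inv_mult_eq:
  fixes P Q R T :: "'a::semiring_1^'n^'n"
  assumes "invertible Q" and "invertible R" and "matrix_inv P ** R = matrix_inv Q ** T"
  shows "Q ** matrix_inv P = T ** matrix_inv R"
proof -
  have "Q ** matrix_inv P ** R = (Q ** matrix_inv Q) ** T"
    by (simp add: assms(3) flip: matrix_mul_assoc)
  then have "Q ** matrix_inv P ** R = T"
    using matrix_mul_matrix_inv(1)[OF assms(1)] by simp
  then show ?thesis
    by (rule matrix_mul_right_cancel[OF assms(2)])
qed

lemma conj_matrix_inv_cancel: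
  fixes A A' M :: "'a::semiring_1^'n^'n"
  assumes "invertible A" and "invertible A'"
  shows "matrix_inv A' ** (A' ** M ** matrix_inv A) ** A = M"
proof -
  have "matrix_inv A' ** (A' ** M ** matrix_inv A) ** A
        = (matrix_inv A' ** A') ** M ** (matrix_inv A ** A)"
    by (simp add: matrix_mul_assoc)
  then show ?thesis
    by (simp add: matrix_mul_matrix_inv(2) assms)
qed

(* Entry (k, j) is det X with column k replaced by the j-th unit vector, as in Cramer's rule. *)
definition adjugate :: "'a::comm_ring_1^'n^'n \<Rightarrow> 'a^'n^'n" where
  "adjugate X = (\<chi> k j. det (\<chi> a b. if b = k then of_bool (a = j) else X $ a $ b))"

lemma matrix_inv_nth:
  fixes X :: "'a::field^'n::finite^'n"
  assumes "invertible X"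
  shows "matrix_inv X $ k $ j = adjugate X $ k $ j / det X"
proof -
  let ?e = "\<chi> a. (of_bool (a = j) :: 'a)"
  have "X *v (\<chi> k. matrix_inv X $ k $ j) = (X ** matrix_inv X) *v ?e"
    by (simp add: vec_eq_iff matrix_vector_mult_def matrix_matrix_mult_def
        of_bool_def if_distrib cong: if_cong)
  also have "\<dots> = ?e"
    using matrix_mul_matrix_inv[OF assms] by simp
  finally have "(\<chi> k. matrix_inv X $ k $ j) =
      (\<chi> k. det (\<chi> a b. if b = k then ?e $ a else X $ a $ b) / det X)"
    using cramer assms invertible_det_nz by blast
  then show ?thesis
    unfolding adjugate_def by (simp add: vec_eq_iff cong: if_cong)
qed

lemma holomorphic_on_det:
  fixes F :: "complex \<Rightarrow> complex^'n::finite^'n"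
  assumes "\<And>i j. (\<lambda>u. F u $ i $ j) holomorphic_on S"
  shows "(\<lambda>u. det (F u)) holomorphic_on S"
  unfolding det_def by (intro holomorphic_intros assms)

lemma meromorphic_on_det:
  fixes F :: "complex \<Rightarrow> complex^'n::finite^'n"
  assumes "\<And>i j. (\<lambda>u. F u $ i $ j) meromorphic_on S"
  shows "(\<lambda>u. det (F u)) meromorphic_on S"
  unfolding det_def by (intro meromorphic_intros assms)

lemma tendsto_det [tendsto_intros]:
  fixes F :: "'b \<Rightarrow> 'a::real_normed_field^'n::finite^'n"
  assumes "(F \<longlongrightarrow> X) G"
  shows "((\<lambda>u. det (F u)) \<longlongrightarrow> det X) G"
  unfolding det_def by (intro tendsto_sum tendsto_mult tendsto_const tendsto_prod tendsto_vec_nth assms)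

lemma holomorphic_on_adjugate:
  fixes F :: "complex \<Rightarrow> complex^'n::finite^'n"
  assumes "\<And>i j. (\<lambda>u. F u $ i $ j) holomorphic_on S"
  shows "(\<lambda>u. adjugate (F u) $ k $ j) holomorphic_on S"
  unfolding adjugate_def vec_lambda_beta
proof (rule holomorphic_on_det)
  show "(\<lambda>u. (\<chi> a b. if b = k then of_bool (a = j) else F u $ a $ b) $ a $ b) holomorphic_on S" for a b
    by (cases "b = k") (simp_all add: assms)
qed

lemma meromorphic_on_adjugate:
  fixes F :: "complex \<Rightarrow> complex^'n::finite^'n"
  assumes "\<And>i j. (\<lambda>u. F u $ i $ j) meromorphic_on S"
  shows "(\<lambda>u. adjugate (F u) $ k $ j) meromorphic_on S"
  unfolding adjugate_def vec_lambda_beta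
proof (rule meromorphic_on_det)
  show "(\<lambda>u. (\<chi> a b. if b = k then of_bool (a = j) else F u $ a $ b) $ a $ b) meromorphic_on S" for a b
    by (cases "b = k") (simp_all add: assms meromorphic_on_const)
qed

lemma tendsto_adjugate:
  fixes F :: "'b \<Rightarrow> 'a::real_normed_field^'n::finite^'n"
  assumes "(F \<longlongrightarrow> X) G"
  shows "((\<lambda>u. adjugate (F u)) \<longlongrightarrow> adjugate X) G"
proof -
  have "((\<lambda>u. (\<chi> a b. if b = k then of_bool (a = j) else F u $ a $ b)) \<longlongrightarrow>
         (\<chi> a b. if b = k then of_bool (a = j) else X $ a $ b)) G" for k j
    by (rule tendsto_vec_lambda)+ (auto intro!: tendsto_vec_nth assms)
  then show ?thesis
    unfolding adjugate_def by (intro tendsto_vec_lambda) (rule tendsto_det)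
qed

lemma holomorphic_on_matrix_inv:
  fixes F :: "complex \<Rightarrow> complex^'n::finite^'n"
  assumes "\<And>i j. (\<lambda>u. F u $ i $ j) holomorphic_on S" and "\<And>u. u \<in> S \<Longrightarrow> invertible (F u)"
  shows "(\<lambda>u. matrix_inv (F u) $ k $ j) holomorphic_on S"
proof -
  have "(\<lambda>u. adjugate (F u) $ k $ j / det (F u)) holomorphic_on S"
    using assms by (intro holomorphic_on_divide holomorphic_on_adjugate holomorphic_on_det)
      (auto simp: invertible_det_nz)
  then show ?thesis
    by (rule holomorphic_transform) (simp add: assms(2) matrix_inv_nth)
qed

lemma meromorphic_on_matrix_inv:
  fixes F :: "complex \<Rightarrow> complex^'n::finite^'n"
  assumes "\<And>i j. (\<lambda>u. F u $ i $ j) meromorphic_on S"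
    and "\<And>z. z \<in> S \<Longrightarrow> \<forall>\<^sub>F u in at z. invertible (F u)"
  shows "(\<lambda>u. matrix_inv (F u) $ k $ j) meromorphic_on S"
proof -
  have "(\<lambda>u. matrix_inv (F u) $ k $ j) meromorphic_on S \<longleftrightarrow>
        (\<lambda>u. adjugate (F u) $ k $ j / det (F u)) meromorphic_on S"
  proof (rule meromorphic_on_cong[OF _ refl])
    show "\<forall>\<^sub>F u in at z. matrix_inv (F u) $ k $ j = adjugate (F u) $ k $ j / det (F u)"
      if "z \<in> S" for z
      using assms(2)[OF that] by eventually_elim (simp add: matrix_inv_nth)
  qed
  also have "\<dots>"
    using assms by (intro meromorphic_on_divide meromorphic_on_adjugate meromorphic_on_det)
  finally show ?thesis .
qed

lemma tendsto_matrix_mult [tendsto_intros]: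
  fixes F :: "'b \<Rightarrow> 'a::real_normed_algebra_1^'n::finite^'m"
    and H :: "'b \<Rightarrow> 'a^'p::finite^'n"
  assumes "(F \<longlongrightarrow> X) G" and "(H \<longlongrightarrow> Y) G"
  shows "((\<lambda>u. F u ** H u) \<longlongrightarrow> X ** Y) G"
  unfolding matrix_matrix_mult_def
  by (rule tendsto_vec_lambda)+ (intro tendsto_sum tendsto_mult tendsto_vec_nth assms)

lemma tendsto_matrix_inv:
  fixes F :: "'b \<Rightarrow> 'a::real_normed_field^'n::finite^'n"
  assumes "(F \<longlongrightarrow> X) G" and "invertible X"
  shows "((\<lambda>u. matrix_inv (F u)) \<longlongrightarrow> matrix_inv X) G"
proof (intro vec_tendstoI)
  fix k j
  have "\<forall>\<^sub>F u in G. det (F u) \<noteq> 0"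
    using tendsto_det[OF assms(1)] assms(2)
    by (auto simp: invertible_det_nz intro: tendsto_imp_eventually_ne)
  then have "\<forall>\<^sub>F u in G. adjugate (F u) $ k $ j / det (F u) = matrix_inv (F u) $ k $ j"
    by eventually_elim (simp add: matrix_inv_nth invertible_det_nz)
  moreover have "((\<lambda>u. adjugate (F u) $ k $ j / det (F u)) \<longlongrightarrow> adjugate X $ k $ j / det X) G"
    using assms by (intro tendsto_divide tendsto_vec_nth tendsto_adjugate tendsto_det)
      (auto simp: invertible_det_nz)
  ultimately show "((\<lambda>u. matrix_inv (F u) $ k $ j) \<longlongrightarrow> matrix_inv X $ k $ j) G"
    using assms(2) by (simp add: matrix_inv_nth Lim_transform_eventually)
qed

lemma tendsto_mult_matrix_inv_eq_mat1:
  fixes P Q X :: "'b \<Rightarrow> 'a::real_normed_field^'n::finite^'n"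
  assumes "((\<lambda>u. P u ** X u) \<longlongrightarrow> mat 1) F" and "((\<lambda>u. Q u ** X u) \<longlongrightarrow> mat 1) F"
  shows "((\<lambda>u. Q u ** matrix_inv (P u)) \<longlongrightarrow> mat 1) F"
proof -
  have inv1: "invertible (mat 1 :: 'a^'n^'n)"
    by (simp add: invertible_det_nz)
  have "\<forall>\<^sub>F u in F. det (P u ** X u) \<noteq> 0"
    using tendsto_det[OF assms(1)] by (auto intro: tendsto_imp_eventually_ne)
  then have "\<forall>\<^sub>F u in F. (Q u ** X u) ** matrix_inv (P u ** X u) = Q u ** matrix_inv (P u)"
  proof eventually_elim
    case (elim u)
    then have "invertible (P u)" and "invertible (P u ** X u)"
      by (auto simp: invertible_det_nz det_mul)
    moreover have "Q u ** matrix_inv (P u) ** (P u ** X u) = Q u ** X u"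
      using matrix_mul_matrix_inv(2)[OF \<open>invertible (P u)\<close>]
      by (metis matrix_mul_assoc matrix_mul_rid)
    ultimately show ?case
      using matrix_mul_right_cancel by metis
  qed
  moreover have "((\<lambda>u. (Q u ** X u) ** matrix_inv (P u ** X u)) \<longlongrightarrow> mat 1 ** matrix_inv (mat 1)) F"
    by (intro tendsto_matrix_mult tendsto_matrix_inv assms inv1)
  moreover have "mat 1 ** matrix_inv (mat 1) = (mat 1 :: 'a^'n^'n)"
    by (rule matrix_mul_matrix_inv(1)[OF inv1])
  ultimately show ?thesis
    by (simp add: Lim_transform_eventually)
qed

lemma mat_meromorphic_eventually_invertible:
  fixes \<phi> :: "complex \<Rightarrow> complex^'n::finite^'n"
  assumes "mat_meromorphic \<phi>" and "open S" and "s \<in> S" and "\<And>u. u \<in> S \<Longrightarrow> invertible (\<phi> u)"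
  shows "\<forall>\<^sub>F u in at z. invertible (\<phi> u)"
proof -
  have mero: "(\<lambda>u. det (\<phi> u)) meromorphic_on UNIV"
    using assms(1) unfolding mat_meromorphic_def by (intro meromorphic_on_det) blast
  have "\<not> (\<forall>\<^sub>F u in cosparse UNIV. det (\<phi> u) = 0)"
  proof
    assume "\<forall>\<^sub>F u in cosparse UNIV. det (\<phi> u) = 0"
    then have "\<forall>\<^sub>F u in at s. det (\<phi> u) = 0"
      by (rule eventually_cosparse_imp_eventually_at) simp
    moreover have "\<forall>\<^sub>F u in at s. u \<in> S"
      using assms(2,3) by (rule eventually_at_in_open')
    ultimately have "\<forall>\<^sub>F u in at s. False"
      by eventually_elim (use assms(4) invertible_det_nz in blast)
    then show False
      by simp
  qed
  then have "\<forall>\<^sub>F u in cosparse UNIV. det (\<phi> u) \<noteq> 0"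
    using meromorphic_imp_constant_or_avoid[OF mero open_UNIV connected_UNIV] by blast
  then have "\<forall>\<^sub>F u in at z. det (\<phi> u) \<noteq> 0"
    by (rule eventually_cosparse_imp_eventually_at) simp
  then show ?thesis
    by eventually_elim (simp add: invertible_det_nz)
qed

section \<open>Removable singularities\<close>

definition removable_sing_at :: "(complex \<Rightarrow> complex) \<Rightarrow> complex \<Rightarrow> bool" where
  "removable_sing_at f z \<longleftrightarrow> (\<exists>g. g analytic_on {z} \<and> (\<forall>\<^sub>F u in at z. f u = g u))"

definition mat_removable_sing_at :: "(complex \<Rightarrow> complex^'n^'m) \<Rightarrow> complex \<Rightarrow> bool" where
  "mat_removable_sing_at F z \<longleftrightarrow> (\<forall>i j. removable_sing_at (\<lambda>u. F u $ i $ j) z)"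

lemma analytic_on_imp_removable_sing_at: "f analytic_on {z} \<Longrightarrow> removable_sing_at f z"
  unfolding removable_sing_at_def by auto

lemma removable_sing_at_cong:
  assumes "\<forall>\<^sub>F u in at z. f u = h u" and "removable_sing_at h z"
  shows "removable_sing_at f z"
proof -
  obtain g where g: "g analytic_on {z}" "\<forall>\<^sub>F u in at z. h u = g u"
    using assms(2) unfolding removable_sing_at_def by blast
  have "\<forall>\<^sub>F u in at z. f u = g u"
    using assms(1) g(2) by eventually_elim simp
  then show ?thesis
    using g(1) unfolding removable_sing_at_def by blast
qed

lemma eventually_at_shift:
  fixes z c :: "'a::real_normed_vector"
  shows "eventually P (at (z + c)) \<longleftrightarrow> (\<forall>\<^sub>F u in at z. P (u + c))"
  by (simp add: eventually_at_to_0[of _ "z + c"] eventually_at_to_0[of _ z] add.assoc)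

lemma removable_sing_at_shift:
  "removable_sing_at (\<lambda>u. f (u + c)) z \<longleftrightarrow> removable_sing_at f (z + c)"
proof -
  have shift: "removable_sing_at (\<lambda>u. h (u + d)) w" if h_rem: "removable_sing_at h (w + d)" for h d w
  proof -
    obtain g where g: "g analytic_on {w + d}" "\<forall>\<^sub>F u in at (w + d). h u = g u"
      using h_rem unfolding removable_sing_at_def by blast
    have "(g \<circ> (\<lambda>u. u + d)) analytic_on {w}"
      by (rule analytic_on_compose) (use g(1) in \<open>auto intro!: analytic_intros\<close>)
    moreover have "\<forall>\<^sub>F u in at w. h (u + d) = g (u + d)"
      using g(2) by (simp add: eventually_at_shift)
    ultimately show ?thesis
      unfolding removable_sing_at_def o_def by blast
  qed
  show ?thesis
    using shift[where h = f and d = c and w = z]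
      shift[where h = "\<lambda>u. f (u + c)" and d = "- c" and w = "z + c"] by auto
qed

lemma removable_sing_at_if_not_pole:
  assumes "f meromorphic_on {z}" and "\<not> is_pole f z"
  shows "removable_sing_at f z"
proof -
  have iso: "isolated_singularity_at f z" and "not_essential f z"
    using assms(1) by (auto simp: meromorphic_at_iff)
  then obtain c where "f \<midarrow>z\<rightarrow> c"
    using assms(2) unfolding not_essential_def by blast
  then have "remove_sings f analytic_on {z}"
    by (rule remove_sings_analytic_at[OF iso])
  moreover have "\<forall>\<^sub>F u in at z. f u = remove_sings f u"
    using eventually_remove_sings_eq_at[OF iso] by eventually_elim auto
  ultimately show ?thesis
    unfolding removable_sing_at_def by blast
qed

lemma removable_sing_at_remove_sings:
  assumes "removable_sing_at f z"
  shows "remove_sings f analytic_on {z}" and "\<forall>\<^sub>F u in at z. remove_sings f u = f u"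
proof -
  obtain g where g: "g analytic_on {z}" "\<forall>\<^sub>F u in at z. f u = g u"
    using assms unfolding removable_sing_at_def by blast
  have iso: "isolated_singularity_at f z"
    using isolated_singularity_at_cong[OF g(2) refl] isolated_singularity_at_analytic[OF g(1)]
    by blast
  have "f \<midarrow>z\<rightarrow> g z"
    using analytic_at_imp_isCont[OF g(1)] g(2) by (simp add: isCont_def tendsto_cong)
  then show "remove_sings f analytic_on {z}"
    by (rule remove_sings_analytic_at[OF iso])
  show "\<forall>\<^sub>F u in at z. remove_sings f u = f u"
    by (rule eventually_remove_sings_eq_at[OF iso])
qed

lemma mat_removable_sing_at_cong:
  assumes "\<forall>\<^sub>F u in at z. F u = H u" and "mat_removable_sing_at H z"
  shows "mat_removable_sing_at F z"
  unfolding mat_removable_sing_at_def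
proof (intro allI)
  fix i j
  have "\<forall>\<^sub>F u in at z. F u $ i $ j = H u $ i $ j"
    using assms(1) by eventually_elim simp
  then show "removable_sing_at (\<lambda>u. F u $ i $ j) z"
    by (rule removable_sing_at_cong) (use assms(2) in \<open>simp add: mat_removable_sing_at_def\<close>)
qed

lemma mat_removable_sing_at_shift:
  "mat_removable_sing_at (\<lambda>u. F (u + c)) z \<longleftrightarrow> mat_removable_sing_at F (z + c)"
proof -
  have "removable_sing_at (\<lambda>u. F (u + c) $ i $ j) z \<longleftrightarrow>
        removable_sing_at (\<lambda>u. F u $ i $ j) (z + c)" for i j
    using removable_sing_at_shift[of "\<lambda>u. F u $ i $ j" c z] by simp
  then show ?thesis
    unfolding mat_removable_sing_at_def by simp
qed

lemma mat_removable_sing_at_mult: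
  fixes F :: "complex \<Rightarrow> complex^'n::finite^'m" and H :: "complex \<Rightarrow> complex^'p^'n"
  assumes "mat_removable_sing_at F z" and "mat_removable_sing_at H z"
  shows "mat_removable_sing_at (\<lambda>u. F u ** H u) z"
proof -
  obtain g where g: "\<And>i j. g i j analytic_on {z}" "\<And>i j. \<forall>\<^sub>F u in at z. F u $ i $ j = g i j u"
    using assms(1) unfolding mat_removable_sing_at_def removable_sing_at_def by metis
  obtain h where h: "\<And>i j. h i j analytic_on {z}" "\<And>i j. \<forall>\<^sub>F u in at z. H u $ i $ j = h i j u"
    using assms(2) unfolding mat_removable_sing_at_def removable_sing_at_def by metis
  show ?thesis
    unfolding mat_removable_sing_at_def removable_sing_at_def
  proof (intro allI exI conjI)
    fix i j
    show "(\<lambda>u. \<Sum>k\<in>UNIV. g i k u * h k j u) analytic_on {z}"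
      by (intro analytic_intros g h)
    have "\<forall>\<^sub>F u in at z. \<forall>k. F u $ i $ k = g i k u \<and> H u $ k $ j = h k j u"
      using g(2) h(2) by (intro eventually_all_finite) (auto intro: eventually_conj)
    then show "\<forall>\<^sub>F u in at z. (F u ** H u) $ i $ j = (\<Sum>k\<in>UNIV. g i k u * h k j u)"
      by eventually_elim (simp add: matrix_matrix_mult_def)
  qed
qed

lemma mat_removable_sing_at_mult_matrix_inv:
  fixes \<phi> \<psi> :: "complex \<Rightarrow> complex^'n::finite^'n"
  assumes "open S" and "z \<in> S"
    and "\<And>i j. (\<lambda>u. \<phi> u $ i $ j) holomorphic_on S" and "\<And>i j. (\<lambda>u. \<psi> u $ i $ j) holomorphic_on S"
    and "\<And>u. u \<in> S \<Longrightarrow> invertible (\<phi> u)"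
  shows "mat_removable_sing_at (\<lambda>u. \<psi> u ** matrix_inv (\<phi> u)) z"
  unfolding mat_removable_sing_at_def matrix_matrix_mult_def
  by (auto intro!: analytic_on_imp_removable_sing_at holomorphic_on_imp_analytic_at[OF _ assms(1,2)]
      holomorphic_on_sum holomorphic_on_mult holomorphic_on_matrix_inv assms)

lemma mat_removable_sing_at_if_not_pole:
  fixes F :: "complex \<Rightarrow> complex^'n::finite^'n"
  assumes "\<And>i j. (\<lambda>u. F u $ i $ j) meromorphic_on {z}" and "z \<notin> poles_mat F"
  shows "mat_removable_sing_at F z"
  using assms unfolding mat_removable_sing_at_def poles_mat_def
  by (blast intro: removable_sing_at_if_not_pole)

(* The bound is only required in punctured neighbourhoods, so it ignores the values of f at the
   singularities themselves. *)
lemma removable_sing_everywhere_Liouville: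
  fixes f :: "complex \<Rightarrow> complex"
  assumes removable: "\<And>z. removable_sing_at f z"
    and bounded: "\<And>e. e > 0 \<Longrightarrow> \<forall>\<^sub>F u in at_infinity. \<forall>\<^sub>F w in at u. norm (f w - l) \<le> e"
  shows "\<forall>\<^sub>F w in at z. f w = l"
proof -
  define g where "g = remove_sings f"
  have g_analytic: "g analytic_on {u}" for u
    unfolding g_def by (rule removable_sing_at_remove_sings(1)[OF removable])
  then have g_holo: "g holomorphic_on UNIV"
    using analytic_on_analytic_at analytic_imp_holomorphic by blast
  have f_lim: "(f \<longlongrightarrow> g u) (at u)" for u
  proof -
    have "(g \<longlongrightarrow> g u) (at u)"
      using analytic_at_imp_isCont[OF g_analytic] by (rule isContD)
    then show ?thesis
      using removable_sing_at_remove_sings(2)[OF removable] unfolding g_def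
      by (rule Lim_transform_eventually)
  qed
  have "(g \<longlongrightarrow> l) at_infinity"
  proof (rule tendstoI)
    fix e :: real assume "e > 0"
    then have "\<forall>\<^sub>F u in at_infinity. \<forall>\<^sub>F w in at u. norm (f w - l) \<le> e / 2"
      by (intro bounded) simp
    then show "\<forall>\<^sub>F u in at_infinity. dist (g u) l < e"
    proof eventually_elim
      case (elim u)
      have "((\<lambda>w. norm (f w - l)) \<longlongrightarrow> norm (g u - l)) (at u)"
        by (intro tendsto_intros f_lim)
      then have "norm (g u - l) \<le> e / 2"
        using elim by (rule tendsto_upperbound) simp
      then show ?case
        using \<open>e > 0\<close> by (simp add: dist_norm)
    qed
  qed
  then have g_const: "g w = l" for w
    using Liouville_weak[OF g_holo] by blast
  show ?thesis
    using removable_sing_at_remove_sings(2)[OF removable, of z]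
    by (rule eventually_mono) (simp add: g_const flip: g_def)
qed

lemma mat_removable_sing_everywhere_Liouville:
  fixes M :: "complex \<Rightarrow> complex^'n::finite^'m::finite"
  assumes "\<And>z. mat_removable_sing_at M z"
    and "\<And>e. e > 0 \<Longrightarrow> \<forall>\<^sub>F u in at_infinity. \<forall>\<^sub>F w in at u. norm (M w - L) \<le> e"
  shows "\<forall>\<^sub>F w in at z. M w = L"
proof -
  have "\<forall>\<^sub>F w in at z. M w $ i $ j = L $ i $ j" for i j
  proof (rule removable_sing_everywhere_Liouville)
    show "removable_sing_at (\<lambda>u. M u $ i $ j) w" for w
      using assms(1) unfolding mat_removable_sing_at_def by blast
    have "norm (M w $ i $ j - L $ i $ j) \<le> norm (M w - L)" for w
      using Finite_Cartesian_Product.norm_nth_le[of "M w - L" i]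
        Finite_Cartesian_Product.norm_nth_le[of "(M w - L) $ i" j] by simp
    then show "\<forall>\<^sub>F u in at_infinity. \<forall>\<^sub>F w in at u. norm (M w $ i $ j - L $ i $ j) \<le> e"
      if "e > 0" for e
      using assms(2)[OF that] by (auto elim!: eventually_mono intro: order_trans)
  qed
  then have "\<forall>\<^sub>F w in at z. \<forall>i j. M w $ i $ j = L $ i $ j"
    by (intro eventually_all_finite allI)
  then show ?thesis
    by eventually_elim (simp add: vec_eq_iff)
qed

lemma tendsto_if_norm_le_inverse_norm:
  fixes f :: "'a::real_normed_vector \<Rightarrow> 'b::real_normed_vector"
  assumes "\<forall>\<^sub>F u in F. norm (f u - l) \<le> C / norm u" and "F \<le> at_infinity"
  shows "(f \<longlongrightarrow> l) F"
proof -
  have "((\<lambda>u. C / norm u) \<longlongrightarrow> 0) at_infinity"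
    by (intro tendsto_divide_0[OF tendsto_const] filterlim_at_top_imp_at_infinity filterlim_norm_at_top)
  then have "((\<lambda>u. C / norm u) \<longlongrightarrow> 0) F"
    using assms(2) by (rule tendsto_mono[rotated])
  then show ?thesis
    using assms(1) by (subst Lim_null) (rule Lim_null_comparison)
qed

lemma near_at_infinity_if_half_plane_limits:
  fixes M M' :: "complex \<Rightarrow> 'a::real_normed_vector"
  assumes right: "(M \<longlongrightarrow> L) (inf at_infinity (principal {u. c < Re u}))"
    and left: "(M' \<longlongrightarrow> L) (inf at_infinity (principal {u. Re u < d}))"
    and "c < d" and eq: "\<And>z. \<forall>\<^sub>F w in at z. M w = M' w" and "e > 0"
  shows "\<forall>\<^sub>F u in at_infinity. \<forall>\<^sub>F w in at u. norm (M w - L) \<le> e"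
proof -
  obtain R1 where R1: "\<And>u. R1 \<le> norm u \<Longrightarrow> c < Re u \<Longrightarrow> dist (M u) L < e"
    using tendstoD[OF right \<open>e > 0\<close>]
    unfolding eventually_inf_principal eventually_at_infinity by auto
  obtain R2 where R2: "\<And>u. R2 \<le> norm u \<Longrightarrow> Re u < d \<Longrightarrow> dist (M' u) L < e"
    using tendstoD[OF left \<open>e > 0\<close>]
    unfolding eventually_inf_principal eventually_at_infinity by auto
  have "\<forall>\<^sub>F w in at u. norm (M w - L) \<le> e" if u: "max R1 R2 < norm u" for u
  proof -
    have far: "\<forall>\<^sub>F w in at u. max R1 R2 < norm w"
      using u by (intro order_tendstoD(1)[OF tendsto_norm[OF tendsto_ident_at]])
    show ?thesis
    proof (cases "c < Re u")
      case True
      then have "\<forall>\<^sub>F w in at u. c < Re w"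
        by (intro order_tendstoD(1)[OF tendsto_Re[OF tendsto_ident_at]])
      with far show ?thesis
        by eventually_elim (use R1 in \<open>force simp: dist_norm\<close>)
    next
      case False
      then have "\<forall>\<^sub>F w in at u. Re w < d"
        using \<open>c < d\<close> by (intro order_tendstoD(2)[OF tendsto_Re[OF tendsto_ident_at]]) auto
      with far eq[of u] show ?thesis
        by eventually_elim (use R2 in \<open>force simp: dist_norm\<close>)
    qed
  qed
  then show ?thesis
    unfolding eventually_at_infinity by (metis less_add_one order_less_le_trans)
qed

section \<open>Propagation along integer shifts\<close>

lemma shift_chain:
  fixes z s :: "'a::semiring_1"
  assumes step: "\<And>w. Q w \<Longrightarrow> P (w + s) \<Longrightarrow> P w"
    and "P (z + of_nat n * s)" and "\<And>k. k < n \<Longrightarrow> Q (z + of_nat k * s)"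
  shows "P z"
  using assms(2,3)
proof (induction n arbitrary: z)
  case 0
  then show ?case by simp
next
  case (Suc n)
  have "P (z + s)"
  proof (rule Suc.IH)
    show "P (z + s + of_nat n * s)"
      using Suc.prems(1) by (simp add: algebra_simps)
    show "Q (z + s + of_nat k * s)" if "k < n" for k
      using Suc.prems(2)[of "Suc k"] that by (simp add: algebra_simps)
  qed
  then show ?case
    using step Suc.prems(2)[of 0] by simp
qed

lemma noncongruent_commute: "noncongruent X Y \<longleftrightarrow> noncongruent Y X"
proof -
  have "x - y \<in> \<int> - {0} \<longleftrightarrow> y - x \<in> \<int> - {0}" for x y :: complex
    using Ints_minus[of "x - y"] Ints_minus[of "y - x"] by auto
  then show ?thesis
    unfolding noncongruent_def by blast
qed

lemma noncongruent_Un: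
  "noncongruent (X \<union> Y) Z \<longleftrightarrow> noncongruent X Z \<and> noncongruent Y Z"
  "noncongruent X (Y \<union> Z) \<longleftrightarrow> noncongruent X Y \<and> noncongruent X Z"
  unfolding noncongruent_def by blast+

lemma noncongruent_shift_propagation:
  fixes P :: "complex \<Rightarrow> bool"
  assumes right: "\<And>z. c < Re z \<Longrightarrow> P z" and left: "\<And>z. Re z < d \<Longrightarrow> P z"
    and down: "\<And>w. w \<notin> X \<Longrightarrow> P (w + 1) \<Longrightarrow> P w"
    and up: "\<And>w. w \<notin> Y \<Longrightarrow> P w \<Longrightarrow> P (w + 1)"
    and "noncongruent X Y"
  shows "P z"
proof (rule ccontr)
  assume not_P: "\<not> P z"
  obtain m :: nat where m: "c - Re z < m"
    using reals_Archimedean2 by blast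
  obtain n :: nat where n: "Re z - d < n"
    using reals_Archimedean2 by blast
  have "\<exists>k<m. z + of_nat k \<in> X"
  proof (rule ccontr)
    assume no_X: "\<not> (\<exists>k<m. z + of_nat k \<in> X)"
    have "P z"
    proof (rule shift_chain[where Q = "\<lambda>w. w \<notin> X" and s = 1 and n = m])
      show "P (z + of_nat m * 1)"
        using m by (intro right) simp
      show "z + of_nat k * 1 \<notin> X" if "k < m" for k
        using no_X that by auto
    qed (rule down)
    with not_P show False ..
  qed
  then obtain k where k: "z + of_nat k \<in> X" by blast
  have "\<exists>k<n. z - of_nat k - 1 \<in> Y"
  proof (rule ccontr)
    assume no_Y: "\<not> (\<exists>k<n. z - of_nat k - 1 \<in> Y)"
    have "P z"
    proof (rule shift_chain[where Q = "\<lambda>w. w - 1 \<notin> Y" and s = "- 1" and n = n])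
      show "P (z + of_nat n * - 1)"
        using n by (intro left) simp
      show "z + of_nat k * - 1 - 1 \<notin> Y" if "k < n" for k
        using no_Y that by auto
      show "P w" if "w - 1 \<notin> Y" "P (w + - 1)" for w
        using up[of "w - 1"] that by simp
    qed
    with not_P show False ..
  qed
  then obtain l where l: "z - of_nat l - 1 \<in> Y" by blast
  have diff: "(z + of_nat k) - (z - of_nat l - 1) = of_nat (Suc (k + l))"
    by simp
  have "of_nat (Suc (k + l)) \<in> \<int> - {0 :: complex}"
    using Ints_of_nat of_nat_eq_0_iff by blast
  then have "(z + of_nat k) - (z - of_nat l - 1) \<in> \<int> - {0}"
    unfolding diff .
  with k l \<open>noncongruent X Y\<close> show False
    unfolding noncongruent_def by blast
qed

section \<open>Rational gauge transformations\<close>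

lemma eventually_at_notin_finite: "finite T \<Longrightarrow> \<forall>\<^sub>F u in at (z::'a::t1_space). u \<notin> T"
  using islimpt_finite islimpt_iff_eventually by blast

lemma rational_fun_meromorphic:
  assumes "rational_fun f"
  shows "f meromorphic_on S"
proof -
  obtain p q where "q \<noteq> 0" and pq: "\<And>u. poly q u \<noteq> 0 \<Longrightarrow> f u = poly p u / poly q u"
    using assms unfolding rational_fun_def by blast
  from \<open>q \<noteq> 0\<close> have "finite {u. poly q u = 0}"
    by (rule poly_roots_finite)
  then have "\<forall>\<^sub>F u in at z. f u = poly p u / poly q u" for z
    by (rule eventually_mono[OF eventually_at_notin_finite]) (simp add: pq)
  moreover have "(\<lambda>u. poly p u / poly q u) meromorphic_on S"
    unfolding poly_altdef by (intro meromorphic_intros)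
  ultimately show ?thesis
    using meromorphic_on_cong[OF _ refl] by metis
qed

lemma rational_fun_finite_neq:
  assumes "rational_fun f" and "rational_fun g" and "\<forall>\<^sub>F u in at z. f u = g u"
  shows "finite {u. f u \<noteq> g u}"
proof -
  obtain p q where "q \<noteq> 0" and pq: "\<And>u. poly q u \<noteq> 0 \<Longrightarrow> f u = poly p u / poly q u"
    using assms(1) unfolding rational_fun_def by blast
  obtain p' q' where "q' \<noteq> 0" and pq': "\<And>u. poly q' u \<noteq> 0 \<Longrightarrow> g u = poly p' u / poly q' u"
    using assms(2) unfolding rational_fun_def by blast
  define Z where "Z = {u. poly q u = 0} \<union> {u. poly q' u = 0}"
  have "finite Z"
    unfolding Z_def using \<open>q \<noteq> 0\<close> \<open>q' \<noteq> 0\<close> by (simp add: poly_roots_finite)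
  define r where "r = p * q' - p' * q"
  have r_root: "poly r u = 0 \<longleftrightarrow> f u = g u" if "u \<notin> Z" for u
  proof -
    have "poly q u \<noteq> 0" and "poly q' u \<noteq> 0"
      using that by (auto simp: Z_def)
    then show ?thesis
      by (simp add: pq pq' r_def frac_eq_eq)
  qed
  have "r = 0"
  proof (rule ccontr)
    assume "r \<noteq> 0"
    then have "finite (Z \<union> {u. poly r u = 0})"
      using \<open>finite Z\<close> by (simp add: poly_roots_finite)
    with assms(3) have "\<forall>\<^sub>F u in at z. False"
      by (rule eventually_elim2[OF _ eventually_at_notin_finite]) (use r_root in auto)
    then show False
      by simp
  qed
  then have "{u. f u \<noteq> g u} \<subseteq> Z"
    using r_root by auto
  with \<open>finite Z\<close> show ?thesis
    by (rule finite_subset[rotated])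
qed

lemma rational_GL_meromorphic: "rational_GL A \<Longrightarrow> (\<lambda>u. A u $ i $ j) meromorphic_on S"
  unfolding rational_GL_def by (simp add: rational_fun_meromorphic)

lemma rational_GL_eventually_invertible: "rational_GL A \<Longrightarrow> \<forall>\<^sub>F u in at z. invertible (A u)"
  unfolding rational_GL_def using eventually_at_notin_finite by force

lemma rational_GL_removable_sing_at:
  "rational_GL A \<Longrightarrow> z \<notin> poles_mat A \<Longrightarrow> mat_removable_sing_at A z"
  by (intro mat_removable_sing_at_if_not_pole rational_GL_meromorphic)

lemma rational_GL_inverse_removable_sing_at:
  fixes A :: "complex \<Rightarrow> complex^'n::finite^'n"
  assumes "rational_GL A" and "z \<notin> poles_mat (\<lambda>u. matrix_inv (A u))"
  shows "mat_removable_sing_at (\<lambda>u. matrix_inv (A u)) z"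
  using assms
  by (intro mat_removable_sing_at_if_not_pole meromorphic_on_matrix_inv rational_GL_meromorphic
      rational_GL_eventually_invertible)

lemma rational_GL_finite_neq:
  fixes A A' :: "complex \<Rightarrow> complex^'n::finite^'n"
  assumes "rational_GL A" and "rational_GL A'" and "\<forall>\<^sub>F u in at z. A u = A' u"
  shows "finite {u. A u \<noteq> A' u}"
proof -
  have "finite {u. A u $ i $ j \<noteq> A' u $ i $ j}" for i j
  proof (rule rational_fun_finite_neq)
    show "rational_fun (\<lambda>u. A u $ i $ j)" and "rational_fun (\<lambda>u. A' u $ i $ j)"
      using assms(1,2) unfolding rational_GL_def by blast+
    show "\<forall>\<^sub>F u in at z. A u $ i $ j = A' u $ i $ j"
      using assms(3) by eventually_elim simp
  qed
  moreover have "{u. A u \<noteq> A' u} = (\<Union>i. \<Union>j. {u. A u $ i $ j \<noteq> A' u $ i $ j})"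
    by (auto simp: vec_eq_iff)
  ultimately show ?thesis
    by simp
qed

lemma gauge_removable_sing_everywhere:
  fixes A A' M :: "complex \<Rightarrow> complex^'n::finite^'n"
  assumes A: "rational_GL A" and A': "rational_GL A'"
    and rec: "\<And>z. \<forall>\<^sub>F u in at z. M (u + 1) = A' u ** M u ** matrix_inv (A u)"
    and right: "\<And>z. c < Re z \<Longrightarrow> mat_removable_sing_at M z"
    and left: "\<And>z. Re z < d \<Longrightarrow> mat_removable_sing_at M z"
    and "noncongruent (poles_mat (\<lambda>u. matrix_inv (A' u)) \<union> poles_mat A)
                       (poles_mat A' \<union> poles_mat (\<lambda>u. matrix_inv (A u)))"
  shows "mat_removable_sing_at M z"
proof (rule noncongruent_shift_propagation[OF right left _ _ assms(6)])
  fix w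
  assume w: "w \<notin> poles_mat (\<lambda>u. matrix_inv (A' u)) \<union> poles_mat A"
    and "mat_removable_sing_at M (w + 1)"
  have "\<forall>\<^sub>F u in at w. M u = matrix_inv (A' u) ** M (u + 1) ** A u"
    using rec[of w] rational_GL_eventually_invertible[OF A, of w]
      rational_GL_eventually_invertible[OF A', of w]
    by eventually_elim (simp add: conj_matrix_inv_cancel)
  moreover have "mat_removable_sing_at (\<lambda>u. matrix_inv (A' u) ** M (u + 1) ** A u) w"
    using w \<open>mat_removable_sing_at M (w + 1)\<close>
    by (intro mat_removable_sing_at_mult rational_GL_inverse_removable_sing_at[OF A']
        rational_GL_removable_sing_at[OF A]) (auto simp: mat_removable_sing_at_shift)
  ultimately show "mat_removable_sing_at M w"
    by (rule mat_removable_sing_at_cong)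
next
  fix w
  assume w: "w \<notin> poles_mat A' \<union> poles_mat (\<lambda>u. matrix_inv (A u))"
    and "mat_removable_sing_at M w"
  have "mat_removable_sing_at (\<lambda>u. A' u ** M u ** matrix_inv (A u)) w"
    using w \<open>mat_removable_sing_at M w\<close>
    by (intro mat_removable_sing_at_mult rational_GL_removable_sing_at[OF A']
        rational_GL_inverse_removable_sing_at[OF A]) auto
  then have "mat_removable_sing_at (\<lambda>u. M (u + 1)) w"
    by (rule mat_removable_sing_at_cong[OF rec])
  then show "mat_removable_sing_at M (w + 1)"
    by (simp add: mat_removable_sing_at_shift)
qed

lemma gauge_eq_mat1_imp_eq:
  fixes A A' M :: "complex \<Rightarrow> complex^'n::finite^'n"
  assumes "\<forall>\<^sub>F u in at z. M (u + 1) = A' u ** M u ** matrix_inv (A u)"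
    and "\<forall>\<^sub>F u in at z. M u = mat 1" and "\<forall>\<^sub>F u in at (z + 1). M u = mat 1"
    and "\<forall>\<^sub>F u in at z. invertible (A u)"
  shows "\<forall>\<^sub>F u in at z. A u = A' u"
  using assms(1,2) assms(3)[unfolded eventually_at_shift] assms(4)
  by eventually_elim (metis matrix_mul_rid mult_matrix_inv_eq_mat1_iff)

section \<open>Canonical solutions\<close>

lemma solves_diff_eq_ratio_recurrence:
  fixes A A' \<phi> \<psi> :: "complex \<Rightarrow> complex^'n::finite^'n"
  assumes "solves_diff_eq A \<phi>" and "solves_diff_eq A' \<psi>"
    and "\<forall>\<^sub>F u in at z. invertible (\<phi> u)" and "\<forall>\<^sub>F u in at z. invertible (A u)"
  shows "\<forall>\<^sub>F u in at z. \<psi> (u + 1) ** matrix_inv (\<phi> (u + 1))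
           = A' u ** (\<psi> u ** matrix_inv (\<phi> u)) ** matrix_inv (A u)"
  using assms(1,2)[unfolded solves_diff_eq_def mero_eq_def, THEN conjunct2, rule_format, of z] assms(3,4)
  by eventually_elim (simp add: mult_matrix_inv_mult_left)

lemma connection_eq_imp_ratio_eq:
  fixes \<phi>p \<phi>m \<phi>p' \<phi>m' :: "complex \<Rightarrow> complex^'n::finite^'n"
  assumes "mero_eq (connection \<phi>p \<phi>m) (connection \<phi>p' \<phi>m')"
    and "\<forall>\<^sub>F u in at z. invertible (\<phi>p' u)" and "\<forall>\<^sub>F u in at z. invertible (\<phi>m u)"
  shows "\<forall>\<^sub>F u in at z. \<phi>p' u ** matrix_inv (\<phi>p u) = \<phi>m' u ** matrix_inv (\<phi>m u)"
  using assms(1)[unfolded mero_eq_def, rule_format, of z] assms(2,3)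
  by eventually_elim (simp add: connection_def mult_matrix_inv_eq_if_inv_mult_eq)

lemma canonical_plus_eventually_invertible:
  assumes "canonical_plus A A0 \<phi>"
  shows "\<forall>\<^sub>F u in at z. invertible (\<phi> u)"
proof -
  obtain c where "\<And>u. c < Re u \<Longrightarrow> invertible (\<phi> u)"
    using assms unfolding canonical_plus_def by blast
  then show ?thesis
    using assms unfolding canonical_plus_def solves_diff_eq_def
    by (intro mat_meromorphic_eventually_invertible[of _ "{u. c < Re u}" "of_real (c + 1)"])
      (auto simp: open_halfspace_Re_gt)
qed

lemma canonical_minus_eventually_invertible:
  assumes "canonical_minus A A0 \<phi>"
  shows "\<forall>\<^sub>F u in at z. invertible (\<phi> u)"
proof -
  obtain c where "\<And>u. Re u < c \<Longrightarrow> invertible (\<phi> u)"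
    using assms unfolding canonical_minus_def by blast
  then show ?thesis
    using assms unfolding canonical_minus_def solves_diff_eq_def
    by (intro mat_meromorphic_eventually_invertible[of _ "{u. Re u < c}" "of_real (c - 1)"])
      (auto simp: open_halfspace_Re_lt)
qed

lemma canonical_plus_ratio_removable_sing:
  fixes \<phi> \<psi> :: "complex \<Rightarrow> complex^'n::finite^'n"
  assumes "canonical_plus A A0 \<phi>" and "canonical_plus A' A0 \<psi>"
  obtains c where "\<And>z. c < Re z \<Longrightarrow> mat_removable_sing_at (\<lambda>u. \<psi> u ** matrix_inv (\<phi> u)) z"
proof -
  obtain c1 where c1: "\<And>i j. (\<lambda>u. \<phi> u $ i $ j) holomorphic_on {u. c1 < Re u}"
    "\<And>u. c1 < Re u \<Longrightarrow> invertible (\<phi> u)"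
    using assms(1) unfolding canonical_plus_def by blast
  obtain c2 where c2: "\<And>i j. (\<lambda>u. \<psi> u $ i $ j) holomorphic_on {u. c2 < Re u}"
    using assms(2) unfolding canonical_plus_def by blast
  show ?thesis
  proof (rule that[of "max c1 c2"], rule mat_removable_sing_at_mult_matrix_inv)
    show "(\<lambda>u. \<phi> u $ i $ j) holomorphic_on {u. max c1 c2 < Re u}"
      and "(\<lambda>u. \<psi> u $ i $ j) holomorphic_on {u. max c1 c2 < Re u}" for i j
      by (auto intro: holomorphic_on_subset[OF c1(1)] holomorphic_on_subset[OF c2])
    show "open {u. max c1 c2 < Re u}"
      by (rule open_halfspace_Re_gt)
  qed (auto simp: c1(2))
qed

lemma canonical_minus_ratio_removable_sing:
  fixes \<phi> \<psi> :: "complex \<Rightarrow> complex^'n::finite^'n"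
  assumes "canonical_minus A A0 \<phi>" and "canonical_minus A' A0 \<psi>"
  obtains d where "\<And>z. Re z < d \<Longrightarrow> mat_removable_sing_at (\<lambda>u. \<psi> u ** matrix_inv (\<phi> u)) z"
proof -
  obtain d1 where d1: "\<And>i j. (\<lambda>u. \<phi> u $ i $ j) holomorphic_on {u. Re u < d1}"
    "\<And>u. Re u < d1 \<Longrightarrow> invertible (\<phi> u)"
    using assms(1) unfolding canonical_minus_def by blast
  obtain d2 where d2: "\<And>i j. (\<lambda>u. \<psi> u $ i $ j) holomorphic_on {u. Re u < d2}"
    using assms(2) unfolding canonical_minus_def by blast
  show ?thesis
  proof (rule that[of "min d1 d2"], rule mat_removable_sing_at_mult_matrix_inv)
    show "(\<lambda>u. \<phi> u $ i $ j) holomorphic_on {u. Re u < min d1 d2}"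
      and "(\<lambda>u. \<psi> u $ i $ j) holomorphic_on {u. Re u < min d1 d2}" for i j
      by (auto intro: holomorphic_on_subset[OF d1(1)] holomorphic_on_subset[OF d2])
    show "open {u. Re u < min d1 d2}"
      by (rule open_halfspace_Re_lt)
  qed (auto simp: d1(2))
qed

lemma canonical_plus_tendsto:
  fixes \<phi> :: "complex \<Rightarrow> complex^'n::finite^'n"
  assumes "canonical_plus A A0 \<phi>"
  shows "((\<lambda>u. \<phi> u ** mexp (smat (- Ln u) A0)) \<longlongrightarrow> mat 1)
           (inf at_infinity (principal {u. c < Re u}))"
proof -
  obtain H :: "nat \<Rightarrow> complex^'n^'n" and C
    where "\<forall>\<^sub>F u in inf at_infinity (principal {u. c < Re u}).
      norm (\<phi> u ** mexp (smat (- Ln u) A0) - (mat 1 + (\<Sum>k<0. smat (1 / u ^ (k + 1)) (H k))))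
        \<le> C / norm u ^ (0 + 1)"
    using assms unfolding canonical_plus_def by blast
  then have "\<forall>\<^sub>F u in inf at_infinity (principal {u. c < Re u}).
      norm (\<phi> u ** mexp (smat (- Ln u) A0) - mat 1) \<le> C / norm u"
    by simp
  then show ?thesis
    by (rule tendsto_if_norm_le_inverse_norm) simp
qed

lemma canonical_minus_tendsto:
  fixes \<phi> :: "complex \<Rightarrow> complex^'n::finite^'n"
  assumes "canonical_minus A A0 \<phi>"
  shows "((\<lambda>u. \<phi> u ** mexp (smat (- Ln (- u)) A0)) \<longlongrightarrow> mat 1)
           (inf at_infinity (principal {u. Re u < c}))"
proof -
  obtain H :: "nat \<Rightarrow> complex^'n^'n" and C
    where "\<forall>\<^sub>F u in inf at_infinity (principal {u. Re u < c}).
      norm (\<phi> u ** mexp (smat (- Ln (- u)) A0) - (mat 1 + (\<Sum>k<0. smat (1 / u ^ (k + 1)) (H k))))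
        \<le> C / norm u ^ (0 + 1)"
    using assms unfolding canonical_minus_def by blast
  then have "\<forall>\<^sub>F u in inf at_infinity (principal {u. Re u < c}).
      norm (\<phi> u ** mexp (smat (- Ln (- u)) A0) - mat 1) \<le> C / norm u"
    by simp
  then show ?thesis
    by (rule tendsto_if_norm_le_inverse_norm) simp
qed

lemma canonical_ratio_eq_mat1:
  fixes \<phi>p \<phi>m \<phi>p' \<phi>m' :: "complex \<Rightarrow> complex^'n::finite^'n"
  assumes "canonical_plus A A0 \<phi>p" and "canonical_minus A A0 \<phi>m"
    and "canonical_plus A' A0 \<phi>p'" and "canonical_minus A' A0 \<phi>m'"
    and removable: "\<And>z. mat_removable_sing_at (\<lambda>u. \<phi>p' u ** matrix_inv (\<phi>p u)) z"
    and eq: "\<And>z. \<forall>\<^sub>F u in at z. \<phi>p' u ** matrix_inv (\<phi>p u) = \<phi>m' u ** matrix_inv (\<phi>m u)"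
  shows "\<forall>\<^sub>F u in at z. \<phi>p' u ** matrix_inv (\<phi>p u) = mat 1"
proof (rule mat_removable_sing_everywhere_Liouville[OF removable])
  fix e :: real
  assume "e > 0"
  have "((\<lambda>u. \<phi>p' u ** matrix_inv (\<phi>p u)) \<longlongrightarrow> mat 1) (inf at_infinity (principal {u. 0 < Re u}))"
    by (rule tendsto_mult_matrix_inv_eq_mat1[OF canonical_plus_tendsto[OF assms(1)]
          canonical_plus_tendsto[OF assms(3)]])
  moreover have "((\<lambda>u. \<phi>m' u ** matrix_inv (\<phi>m u)) \<longlongrightarrow> mat 1)
                   (inf at_infinity (principal {u. Re u < 1}))"
    by (rule tendsto_mult_matrix_inv_eq_mat1[OF canonical_minus_tendsto[OF assms(2)]
          canonical_minus_tendsto[OF assms(4)]])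
  ultimately show "\<forall>\<^sub>F u in at_infinity. \<forall>\<^sub>F w in at u.
                     norm (\<phi>p' w ** matrix_inv (\<phi>p w) - mat 1) \<le> e"
    by (rule near_at_infinity_if_half_plane_limits[OF _ _ _ eq \<open>e > 0\<close>]) simp
qed

theorem proposition4p11:
  fixes A A' :: "complex \<Rightarrow> complex ^ 'n ^ 'n" and A0 :: "complex ^ 'n ^ 'n"
  assumes "rational_GL A" and "rational_GL A'"
    and "normalized_at_infty A A0" and "normalized_at_infty A' A0"
    and "canonical_plus A A0 \<phi>p" and "canonical_minus A A0 \<phi>m"
    and "canonical_plus A' A0 \<phi>p'" and "canonical_minus A' A0 \<phi>m'"
    and "mero_eq (connection \<phi>p \<phi>m) (connection \<phi>p' \<phi>m')"
    and "noncongruent (poles_mat (\<lambda>u. matrix_inv (A u))) (poles_mat A)"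
    and "noncongruent (poles_mat (\<lambda>u. matrix_inv (A' u))) (poles_mat A')"
    and "noncongruent (poles_mat (\<lambda>u. matrix_inv (A u))) (poles_mat (\<lambda>u. matrix_inv (A' u)))"
    and "noncongruent (poles_mat A) (poles_mat A')"
  shows "finite {u. A u \<noteq> A' u}"
proof -
  define M where "M = (\<lambda>u. \<phi>p' u ** matrix_inv (\<phi>p u))"
  have "solves_diff_eq A \<phi>p" and "solves_diff_eq A' \<phi>p'"
    using assms(5,7) unfolding canonical_plus_def by blast+
  then have rec: "\<forall>\<^sub>F u in at z. M (u + 1) = A' u ** M u ** matrix_inv (A u)" for z
    unfolding M_def
    by (intro solves_diff_eq_ratio_recurrence canonical_plus_eventually_invertible[OF assms(5)]
        rational_GL_eventually_invertible[OF assms(1)])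
  have M_left: "\<forall>\<^sub>F u in at z. M u = \<phi>m' u ** matrix_inv (\<phi>m u)" for z
    unfolding M_def
    by (intro connection_eq_imp_ratio_eq[OF assms(9)] canonical_plus_eventually_invertible[OF assms(7)]
        canonical_minus_eventually_invertible[OF assms(6)])
  obtain c where right: "\<And>z. c < Re z \<Longrightarrow> mat_removable_sing_at M z"
    using canonical_plus_ratio_removable_sing[OF assms(5,7)] unfolding M_def by blast
  obtain d where left: "\<And>z. Re z < d \<Longrightarrow> mat_removable_sing_at M z"
    using canonical_minus_ratio_removable_sing[OF assms(6,8)] mat_removable_sing_at_cong[OF M_left]
    by metis
  have nc: "noncongruent (poles_mat (\<lambda>u. matrix_inv (A' u)) \<union> poles_mat A)
                     (poles_mat A' \<union> poles_mat (\<lambda>u. matrix_inv (A u)))"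
    using assms(10-13) noncongruent_commute by (auto simp: noncongruent_Un)
  have removable: "mat_removable_sing_at M z" for z
    by (rule gauge_removable_sing_everywhere[OF assms(1,2) rec right left nc])
  have M_eq_1: "\<forall>\<^sub>F u in at z. M u = mat 1" for z
    unfolding M_def
    by (rule canonical_ratio_eq_mat1[OF assms(5-8)]) (use removable M_left in \<open>simp_all add: M_def\<close>)
  have "\<forall>\<^sub>F u in at 0. A u = A' u"
    by (rule gauge_eq_mat1_imp_eq[OF rec M_eq_1 M_eq_1 rational_GL_eventually_invertible[OF assms(1)]])
  then show ?thesis
    by (rule rational_GL_finite_neq[OF assms(1,2)])
qed

end
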